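(* If $G$ is a CAM group, then $G$ is residually finite.
   Context: Let $G$ be a countable discrete group. A topological $G$-system $(X,T)$ consists of a compact metric space $X$ and an action $T\colon G\to\mathrm{Homeo}(X)$, $g\mapsto T_g$. The system is topologically transitive if for all nonempty open $U,V\subseteq X$ there is $g\in G$ with $T_gU\cap V\neq\emptyset$; the action is faithful if $T_g=\mathrm{id}_X$ only when $g$ is the identity. A point is periodic if its $G$-orbit is finite. The system is chaotic almost minimal (CAM) if: (1) it is topologically transitive and the action is faithful; (2) the periodic points are dense in $X$; (3) every proper closed $T$-invariant subset of $X$ is finite. The group $G$ is a CAM group if there is an infinite compact metric space $X$ and a CAM $G$-system on $X$. A group is residually finite if for every non-identity $g$ there is a homomorphism to a finite group not sending $g$ to the identity. *)

theory Defs
  imports "HOL-Analysis.Analysis" "HOL-Algebra.Group"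
begin

definition topological_G_system :: "('g, 'c) monoid_scheme \<Rightarrow> 'a metric \<Rightarrow> ('g \<Rightarrow> 'a \<Rightarrow> 'a) \<Rightarrow> bool" where
  "topological_G_system G m T \<longleftrightarrow>
     group G \<and> countable (carrier G) \<and> compact_space (mtopology_of m) \<and>
     (\<forall>g\<in>carrier G. homeomorphic_map (mtopology_of m) (mtopology_of m) (T g)) \<and>
     (\<forall>x\<in>mspace m. T \<one>\<^bsub>G\<^esub> x = x) \<and>
     (\<forall>g\<in>carrier G. \<forall>h\<in>carrier G. \<forall>x\<in>mspace m. T (g \<otimes>\<^bsub>G\<^esub> h) x = T g (T h x))"

definition topologically_transitive :: "('g, 'c) monoid_scheme \<Rightarrow> 'a metric \<Rightarrow> ('g \<Rightarrow> 'a \<Rightarrow> 'a) \<Rightarrow> bool" where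
  "topologically_transitive G m T \<longleftrightarrow>
     (\<forall>U V. openin (mtopology_of m) U \<and> openin (mtopology_of m) V \<and> U \<noteq> {} \<and> V \<noteq> {}
        \<longrightarrow> (\<exists>g\<in>carrier G. T g ` U \<inter> V \<noteq> {}))"

definition faithful_action :: "('g, 'c) monoid_scheme \<Rightarrow> 'a metric \<Rightarrow> ('g \<Rightarrow> 'a \<Rightarrow> 'a) \<Rightarrow> bool" where
  "faithful_action G m T \<longleftrightarrow>
     (\<forall>g\<in>carrier G. (\<forall>x\<in>mspace m. T g x = x) \<longrightarrow> g = \<one>\<^bsub>G\<^esub>)"

definition periodic_point :: "('g, 'c) monoid_scheme \<Rightarrow> 'a metric \<Rightarrow> ('g \<Rightarrow> 'a \<Rightarrow> 'a) \<Rightarrow> 'a \<Rightarrow> bool" where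
  "periodic_point G m T x \<longleftrightarrow> x \<in> mspace m \<and> finite ((\<lambda>g. T g x) ` carrier G)"

definition invariant_set :: "('g, 'c) monoid_scheme \<Rightarrow> ('g \<Rightarrow> 'a \<Rightarrow> 'a) \<Rightarrow> 'a set \<Rightarrow> bool" where
  "invariant_set G T A \<longleftrightarrow> (\<forall>g\<in>carrier G. T g ` A \<subseteq> A)"

definition CAM_system :: "('g, 'c) monoid_scheme \<Rightarrow> 'a metric \<Rightarrow> ('g \<Rightarrow> 'a \<Rightarrow> 'a) \<Rightarrow> bool" where
  "CAM_system G m T \<longleftrightarrow>
     topological_G_system G m T \<and>
     topologically_transitive G m T \<and> faithful_action G m T \<and>
     (mtopology_of m) closure_of {x. periodic_point G m T x} = mspace m \<and>
     (\<forall>A. closedin (mtopology_of m) A \<and> A \<noteq> mspace m \<and> invariant_set G T A \<longrightarrow> finite A)"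

text \<open>Residual finiteness; finite target groups are represented on carriers of type nat
  (every finite group is isomorphic to one of these).\<close>
definition residually_finite :: "('g, 'c) monoid_scheme \<Rightarrow> bool" where
  "residually_finite G \<longleftrightarrow>
     (\<forall>g\<in>carrier G. g \<noteq> \<one>\<^bsub>G\<^esub> \<longrightarrow>
        (\<exists>(H :: nat monoid) h. group H \<and> finite (carrier H) \<and> h \<in> hom G H \<and> h g \<noteq> \<one>\<^bsub>H\<^esub>))"

end

theory Submission
  imports Defs "HOL-Algebra.Bij"
begin

text \<open>A non-identity element g acts non-trivially, and since periodic points are dense and the
  set of points moved by g is open, g moves some periodic point p. The orbit of p is a finite
  invariant set, so restricting the action to it gives a homomorphism into a finite symmetric
  group under which g survives.\<close>

lemma residually_finite_if_separated_by_finite_groups: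
  fixes G :: "('g, 'c) monoid_scheme"
  assumes G: "group G"
    and sep: "\<And>g. g \<in> carrier G \<Longrightarrow> g \<noteq> \<one>\<^bsub>G\<^esub> \<Longrightarrow>
      \<exists>(K :: ('b, 'd) monoid_scheme) h. group K \<and> finite (carrier K) \<and> h \<in> hom G K \<and> h g \<noteq> \<one>\<^bsub>K\<^esub>"
  shows "residually_finite G"
  unfolding residually_finite_def
proof (intro ballI impI)
  fix g assume "g \<in> carrier G" "g \<noteq> \<one>\<^bsub>G\<^esub>"
  then obtain K :: "('b, 'd) monoid_scheme" and h
    where K: "group K" "finite (carrier K)" and h: "h \<in> hom G K" "h g \<noteq> \<one>\<^bsub>K\<^esub>"
    using sep by blast
  interpret K: group K by (rule K(1))
  obtain enc :: "'b \<Rightarrow> nat" where enc: "inj_on enc (carrier K)"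
    using K(2) finite_imp_inj_to_nat_seg by blast
  let ?dec = "inv_into (carrier K) enc"
  define H :: "nat monoid" where
    "H = \<lparr>carrier = enc ` carrier K, mult = (\<lambda>a b. enc (?dec a \<otimes>\<^bsub>K\<^esub> ?dec b)), one = enc \<one>\<^bsub>K\<^esub>\<rparr>"
  have enc_hom: "enc \<in> hom K H"
    using enc by (auto simp: hom_def H_def)
  have "group (H\<lparr>carrier := enc ` carrier K, one := enc \<one>\<^bsub>K\<^esub>\<rparr>)"
    by (rule K.hom_imp_img_group[OF enc_hom])
  then have "group H" by (simp add: H_def)
  moreover have "finite (carrier H)" using K(2) by (simp add: H_def)
  moreover have "enc \<circ> h \<in> hom G H" using hom_compose[OF h(1) enc_hom] by (simp add: comp_def)
  moreover have "(enc \<circ> h) g \<noteq> \<one>\<^bsub>H\<^esub>"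
    using h \<open>g \<in> carrier G\<close> enc by (simp add: H_def inj_on_eq_iff hom_in_carrier)
  ultimately show "\<exists>(H :: nat monoid) h. group H \<and> finite (carrier H) \<and> h \<in> hom G H \<and> h g \<noteq> \<one>\<^bsub>H\<^esub>"
    by blast
qed

lemma restrict_action_in_hom_BijGroup:
  fixes G (structure)
  assumes G: "group G"
    and one: "\<And>x. x \<in> S \<Longrightarrow> T \<one> x = x"
    and mult: "\<And>k l x. k \<in> carrier G \<Longrightarrow> l \<in> carrier G \<Longrightarrow> x \<in> S \<Longrightarrow> T (k \<otimes> l) x = T k (T l x)"
    and inv: "invariant_set G T S"
  shows "(\<lambda>k. restrict (T k) S) \<in> hom G (BijGroup S)"
proof -
  interpret group G by (rule G)
  have maps: "T k ` S \<subseteq> S" if "k \<in> carrier G" for k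
    using inv that unfolding invariant_set_def by blast
  have cancel: "T (inv k) (T k x) = x" if "k \<in> carrier G" "x \<in> S" for k x
  proof -
    have "T (inv k) (T k x) = T (inv k \<otimes> k) x" using that by (simp only: mult inv_closed)
    also have "\<dots> = x" using that by (simp add: one)
    finally show ?thesis .
  qed
  have Bij: "restrict (T k) S \<in> Bij S" if k: "k \<in> carrier G" for k
  proof -
    have "bij_betw (T k) S S"
    proof (rule bij_betw_byWitness[where f' = "T (inv k)"])
      show "\<forall>x\<in>S. T (inv k) (T k x) = x" using cancel k by blast
      show "\<forall>x\<in>S. T k (T (inv k) x) = x" using cancel[of "inv k"] k by (simp add: inv_inv)
      show "T k ` S \<subseteq> S" using maps k by blast
      show "T (inv k) ` S \<subseteq> S" using maps k by blast
    qed
    then show ?thesis by (simp add: Bij_def)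
  qed
  have "restrict (T (k \<otimes> l)) S = compose S (restrict (T k) S) (restrict (T l) S)"
    if "k \<in> carrier G" "l \<in> carrier G" for k l
    using that maps by (auto simp: compose_def mult fun_eq_iff image_subset_iff)
  then show ?thesis
    using Bij by (auto simp: hom_def BijGroup_def)
qed

lemma finite_carrier_BijGroup:
  assumes "finite S"
  shows "finite (carrier (BijGroup S))"
proof -
  have "Bij S \<subseteq> S \<rightarrow>\<^sub>E S"
    unfolding Bij_def PiE_def by (auto dest: bij_betw_imp_funcset)
  moreover have "finite (S \<rightarrow>\<^sub>E S)"
    using assms by (simp add: finite_PiE)
  ultimately show ?thesis
    unfolding BijGroup_def by (simp add: finite_subset)
qed

lemma invariant_set_orbit:
  fixes G (structure)
  assumes "group G"
    and "\<And>k l. k \<in> carrier G \<Longrightarrow> l \<in> carrier G \<Longrightarrow> T (k \<otimes> l) x = T k (T l x)"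
  shows "invariant_set G T ((\<lambda>k. T k x) ` carrier G)"
  unfolding invariant_set_def
proof (intro ballI subsetI)
  fix k y assume "k \<in> carrier G" "y \<in> T k ` (\<lambda>l. T l x) ` carrier G"
  then obtain l where "l \<in> carrier G" "y = T (k \<otimes> l) x"
    using assms(2) by auto
  then show "y \<in> (\<lambda>k. T k x) ` carrier G"
    using \<open>k \<in> carrier G\<close> assms(1) by (simp add: group.is_monoid monoid.m_closed)
qed

lemma periodic_point_moved:
  assumes sys: "topological_G_system G m T" and faithful: "faithful_action G m T"
    and dense: "mtopology_of m closure_of {x. periodic_point G m T x} = mspace m"
    and g: "g \<in> carrier G" "g \<noteq> \<one>\<^bsub>G\<^esub>"
  obtains p where "periodic_point G m T p" "T g p \<noteq> p"
proof -
  let ?X = "mtopology_of m"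
  let ?U = "topspace ?X - {y \<in> topspace ?X. T g y = id y}"
  have "continuous_map ?X ?X (T g)"
    using sys g unfolding topological_G_system_def by (meson homeomorphic_imp_continuous_map)
  moreover have "Hausdorff_space ?X"
    by (simp add: Metric_space.Hausdorff_space_mtopology mtopology_of_def)
  ultimately have "closedin ?X {y \<in> topspace ?X. T g y = id y}"
    using closedin_continuous_maps_eq continuous_map_id by blast
  then have U_open: "openin ?X ?U" by blast
  obtain x where "x \<in> mspace m" "T g x \<noteq> x"
    using faithful g unfolding faithful_action_def by blast
  then have "x \<in> ?U \<inter> ?X closure_of {x. periodic_point G m T x}"
    using dense by simp
  then have "?U \<inter> {x. periodic_point G m T x} \<noteq> {}"
    using openin_Int_closure_of_eq_empty[OF U_open] by blast
  then show thesis using that by auto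
qed

lemma restrict_action_to_orbit_in_hom_BijGroup:
  assumes sys: "topological_G_system G m T" and p: "p \<in> mspace m"
  defines "Orb \<equiv> (\<lambda>k. T k p) ` carrier G"
  shows "(\<lambda>k. restrict (T k) Orb) \<in> hom G (BijGroup Orb)"
proof -
  have G: "group G"
    and one: "\<And>x. x \<in> mspace m \<Longrightarrow> T \<one>\<^bsub>G\<^esub> x = x"
    and mult: "\<And>k l x. k \<in> carrier G \<Longrightarrow> l \<in> carrier G \<Longrightarrow> x \<in> mspace m \<Longrightarrow>
        T (k \<otimes>\<^bsub>G\<^esub> l) x = T k (T l x)"
    using sys by (auto simp: topological_G_system_def)
  have "Orb \<subseteq> mspace m"
    using sys p unfolding Orb_def topological_G_system_def
    by (force dest: homeomorphic_imp_continuous_map continuous_map_image_subset_topspace)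
  moreover have "invariant_set G T Orb"
    unfolding Orb_def using p by (auto intro!: invariant_set_orbit G mult)
  ultimately show ?thesis
    by (intro restrict_action_in_hom_BijGroup G) (auto intro: one mult)
qed

theorem proposition3p1:
  fixes G :: "('g, 'c) monoid_scheme" and m :: "'a metric" and T :: "'g \<Rightarrow> 'a \<Rightarrow> 'a"
  assumes "group G" and "countable (carrier G)"
    and "infinite (mspace m)" and "compact_space (mtopology_of m)"
    and "CAM_system G m T"
  shows "residually_finite G"
proof (rule residually_finite_if_separated_by_finite_groups[OF \<open>group G\<close>])
  fix g assume g: "g \<in> carrier G" "g \<noteq> \<one>\<^bsub>G\<^esub>"
  have sys: "topological_G_system G m T"
    using \<open>CAM_system G m T\<close> by (simp add: CAM_system_def)
  obtain p where p: "periodic_point G m T p" "T g p \<noteq> p"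
    using periodic_point_moved[OF sys _ _ g] \<open>CAM_system G m T\<close> by (auto simp: CAM_system_def)
  define Orb where "Orb = (\<lambda>k. T k p) ` carrier G"
  have "(\<lambda>k. restrict (T k) Orb) \<in> hom G (BijGroup Orb)"
    unfolding Orb_def using sys p(1)
    by (intro restrict_action_to_orbit_in_hom_BijGroup) (auto simp: periodic_point_def)
  moreover have "restrict (T g) Orb \<noteq> \<one>\<^bsub>BijGroup Orb\<^esub>"
  proof -
    have "p \<in> Orb"
      using sys p(1) \<open>group G\<close> unfolding Orb_def topological_G_system_def periodic_point_def
      by (metis group.is_monoid image_eqI monoid.one_closed)
    then show ?thesis using p(2) by (auto simp: BijGroup_def dest: fun_cong[of _ _ p])
  qed
  moreover have "finite Orb"
    using p(1) by (simp add: Orb_def periodic_point_def)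
  ultimately show "\<exists>(K :: ('a \<Rightarrow> 'a) monoid) h. group K \<and> finite (carrier K) \<and> h \<in> hom G K \<and> h g \<noteq> \<one>\<^bsub>K\<^esub>"
    using group_BijGroup finite_carrier_BijGroup by blast
qed

end
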